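(* Let $d \ge 1$, $\sigma>0$, $\beta>0$, and $\mathbf{p}\in\mathbb{Z}^d$. Let $H:\mathbb{R}^d\to\mathbb{Z}^d$ be the quantization map $H(\mathbf{x}) = \lfloor \mathbf{x} + \mathbf{0.5}\rfloor$, where the floor is applied coordinatewise and $\mathbf{0.5}=(0.5,\dots,0.5)$. Let $\mathbf{x}\sim\mathcal{N}(\mathbf{p},\sigma^2\mathbf{I}_d)$ (a natural query) and, independently, $\boldsymbol{\delta}\sim\mathcal{N}(0,\beta^2\mathbf{I}_d)$ (a perturbation), so that $\mathbf{x}+\boldsymbol{\delta}$ is an attack query. Define the false positive rate $\alpha^{fp} = \mathbb{P}[H(\mathbf{x})\neq \mathbf{p}]$ and the detection rate $\alpha^{det} = \mathbb{P}[H(\mathbf{x}+\boldsymbol{\delta}) = H(\mathbf{x})]$. Then $$\alpha^{det} \le 1 - \bigl(2 - 2\Phi(0.5\,\beta^{-1})\bigr)^d\,(1-\alpha^{fp}),$$ where $\Phi$ is the cumulative distribution function of the standard normal distribution $\mathcal{N}(0,1)$.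
   Context: Toy model of a stateful defense: a query is flagged as an attack query if and only if its feature vector $H(\cdot)$ is exactly equal to that of a prior query; here the prior query is the natural query $\mathbf{x}$, and a natural query is counted as correctly (non-falsely) handled when $H(\mathbf{x})=\mathbf{p}$, so $1-\alpha^{fp}=\mathbb{P}[H(\mathbf{x})=\mathbf{p}]$. *)

theory Defs
  imports "HOL-Probability.Probability"
begin

definition gauss_vec :: "real^'d \<Rightarrow> real \<Rightarrow> (real^'d) measure" where
  "gauss_vec m s = density lborel (\<lambda>x. \<Prod>i\<in>UNIV. normal_density (m$i) s (x$i))"

definition quantH :: "real^'d \<Rightarrow> int^'d" where
  "quantH x = (\<chi> i. \<lfloor>x$i + 1/2\<rfloor>)"

definition Phi :: "real \<Rightarrow> real" where
  "Phi = cdf (density lborel std_normal_density)"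

definition joint_law :: "int^'d \<Rightarrow> real \<Rightarrow> real \<Rightarrow> ((real^'d) \<times> (real^'d)) measure" where
  "joint_law p \<sigma> \<beta> = gauss_vec (\<chi> i. of_int (p$i)) \<sigma> \<Otimes>\<^sub>M gauss_vec 0 \<beta>"

definition alpha_fp :: "int^'d \<Rightarrow> real \<Rightarrow> real" where
  "alpha_fp p \<sigma> = measure (gauss_vec (\<chi> i. of_int (p$i)) \<sigma>) {x. quantH x \<noteq> p}"

definition alpha_det :: "int^'d \<Rightarrow> real \<Rightarrow> real \<Rightarrow> real" where
  "alpha_det p \<sigma> \<beta> = measure (joint_law p \<sigma> \<beta>) {(x, \<delta>). quantH (x + \<delta>) = quantH x}"

end

theory Submission
  imports Defs
begin

(* Only one coordinate is needed. If H(x) = p and t = x_i - p_i, then |t| <= 1/2 and the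
   i-th rounding changes as soon as delta_i leaves [-1/2 - t, 1/2 - t). For a centred normal
   variable, the mass outside an interval of fixed length is smallest when the interval is
   centred (the part of one tail that the shift uncovers is dominated by the part near the
   origin that it covers, where the density is larger), so this happens with probability at
   least P(|delta_i| > 1/2) = 2 - 2 Phi(1/(2 beta)) =: q. Integrating over x yields
   P[H(x) = p, H(x + delta) <> p] >= q (1 - alpha_fp); that event is disjoint from the
   detection event, and q^d <= q since q <= 1. *)

lemma nn_integral_lborel_vec_prod:
  fixes g :: "'d::finite \<Rightarrow> real \<Rightarrow> ennreal"
  assumes [measurable]: "\<And>j. g j \<in> borel_measurable borel"
  shows "(\<integral>\<^sup>+x. (\<Prod>j\<in>UNIV. g j (x$j)) \<partial>(lborel :: (real^'d) measure))
           = (\<Prod>j\<in>UNIV. \<integral>\<^sup>+t. g j t \<partial>lborel)"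
proof -
  have inj: "inj (\<lambda>j::'d. axis j (1::real))"
    by (auto intro!: injI simp: axis_eq_axis)
  have Basis: "(Basis :: (real^'d) set) = range (\<lambda>j. axis j 1)"
    by (auto simp: Basis_vec_def)
  define F where "F b = g (inv (\<lambda>j::'d. axis j (1::real)) b)" for b
  have F: "F (axis j 1) = g j" for j
    unfolding F_def by (simp add: inv_f_f[OF inj])
  have "(\<integral>\<^sup>+x. (\<Prod>b\<in>Basis. F b (x \<bullet> b)) \<partial>(lborel :: (real^'d) measure))
          = (\<Prod>b\<in>Basis. \<integral>\<^sup>+t. F b t \<partial>lborel)"
    by (rule nn_integral_lborel_prod) (auto simp: F_def)
  then show ?thesis
    unfolding Basis by (simp add: prod.reindex[OF inj] F inner_axis)
qed

lemma sets_gauss_vec [simp, measurable_cong]: "sets (gauss_vec m s) = sets borel"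
  by (simp add: gauss_vec_def)

lemma space_gauss_vec [simp]: "space (gauss_vec m s) = UNIV"
  by (simp add: gauss_vec_def)

lemma nn_integral_gauss_vec_prod:
  fixes g :: "'d::finite \<Rightarrow> real \<Rightarrow> ennreal"
  assumes [measurable]: "\<And>j. g j \<in> borel_measurable borel"
  shows "(\<integral>\<^sup>+x. (\<Prod>j\<in>UNIV. g j (x$j)) \<partial>gauss_vec m s)
           = (\<Prod>j\<in>UNIV. \<integral>\<^sup>+t. normal_density (m$j) s t * g j t \<partial>lborel)"
proof -
  have "(\<integral>\<^sup>+x. (\<Prod>j\<in>UNIV. g j (x$j)) \<partial>gauss_vec m s)
          = (\<integral>\<^sup>+x. (\<Prod>j\<in>UNIV. normal_density (m$j) s (x$j) * g j (x$j)) \<partial>lborel)"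
    unfolding gauss_vec_def by (simp add: nn_integral_density prod.distrib prod_ennreal)
  also have "\<dots> = (\<Prod>j\<in>UNIV. \<integral>\<^sup>+t. normal_density (m$j) s t * g j t \<partial>lborel)"
    by (rule nn_integral_lborel_vec_prod) simp
  finally show ?thesis .
qed

lemma distr_gauss_vec_component:
  fixes m :: "real^'d" and i :: 'd
  assumes "s > 0"
  shows "distr (gauss_vec m s) lborel (\<lambda>x. x$i) = density lborel (normal_density (m$i) s)"
proof (rule measure_eqI)
  fix S :: "real set"
  assume "S \<in> sets (distr (gauss_vec m s) lborel (\<lambda>x. x$i))"
  then have [measurable]: "S \<in> sets borel" by simp
  define g :: "'d \<Rightarrow> real \<Rightarrow> ennreal"
    where "g j t = (if j = i then indicator S t else 1)" for j t
  have "indicator {x. x$i \<in> S} x = (\<Prod>j\<in>UNIV. g j (x$j))" for x :: "real^'d"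
    by (simp add: g_def indicator_def)
  then have "emeasure (gauss_vec m s) {x. x$i \<in> S} = (\<integral>\<^sup>+x. (\<Prod>j\<in>UNIV. g j (x$j)) \<partial>gauss_vec m s)"
    by (simp flip: nn_integral_indicator)
  also have "\<dots> = (\<Prod>j\<in>UNIV. \<integral>\<^sup>+t. normal_density (m$j) s t * g j t \<partial>lborel)"
    by (rule nn_integral_gauss_vec_prod) (simp add: g_def)
  also have "\<dots> = (\<Prod>j\<in>UNIV. if j = i then emeasure (density lborel (normal_density (m$i) s)) S else 1)"
  proof (rule prod.cong[OF refl])
    fix j
    interpret prob_space "density lborel (normal_density (m$j) s)"
      using assms by (rule prob_space_normal_density)
    show "(\<integral>\<^sup>+t. normal_density (m$j) s t * g j t \<partial>lborel)
            = (if j = i then emeasure (density lborel (normal_density (m$i) s)) S else 1)"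
      using emeasure_space_1 by (auto simp: emeasure_density g_def)
  qed
  finally show "emeasure (distr (gauss_vec m s) lborel (\<lambda>x. x$i)) S
                  = emeasure (density lborel (normal_density (m$i) s)) S"
    by (simp add: emeasure_distr vimage_def)
qed simp

lemma prob_space_gauss_vec:
  fixes m :: "real^'d"
  assumes "s > 0"
  shows "prob_space (gauss_vec m s)"
proof
  fix i :: 'd
  interpret prob_space "density lborel (normal_density (m$i) s)"
    using assms by (rule prob_space_normal_density)
  have "emeasure (gauss_vec m s) (space (gauss_vec m s))
          = emeasure (distr (gauss_vec m s) lborel (\<lambda>x. x$i)) UNIV"
    by (simp add: emeasure_distr)
  then show "emeasure (gauss_vec m s) (space (gauss_vec m s)) = 1"
    using emeasure_space_1 by (simp add: distr_gauss_vec_component[OF assms])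
qed

abbreviation centered_normal :: "real \<Rightarrow> real measure" where
  "centered_normal \<sigma> \<equiv> density lborel (normal_density 0 \<sigma>)"

lemma distr_centered_normal_scale:
  assumes "\<sigma> > 0" and "c \<noteq> 0"
  shows "distr (centered_normal \<sigma>) lborel ((*) c) = centered_normal (\<bar>c\<bar> * \<sigma>)"
proof -
  interpret prob_space "centered_normal \<sigma>"
    using assms(1) by (rule prob_space_normal_density)
  have "distributed (centered_normal \<sigma>) lborel (\<lambda>x. x) (normal_density 0 \<sigma>)"
    by (simp add: distributed_def distr_id2)
  from normal_density_affine[OF this assms(1) assms(2), of 0]
  show ?thesis by (simp add: distributed_def)
qed

lemma measure_centered_normal_uminus:
  assumes "\<sigma> > 0" and "S \<in> sets borel"
  shows "measure (centered_normal \<sigma>) {x. -x \<in> S} = measure (centered_normal \<sigma>) S"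
proof -
  have "measure (centered_normal \<sigma>) S = measure (distr (centered_normal \<sigma>) lborel ((*) (-1))) S"
    using distr_centered_normal_scale[OF assms(1), of "-1"] by simp
  also have "\<dots> = measure (centered_normal \<sigma>) {x. -x \<in> S}"
    using assms(2) by (subst measure_distr) (auto simp: vimage_def)
  finally show ?thesis ..
qed

lemma Phi_eq_centered_normal:
  assumes "\<sigma> > 0"
  shows "Phi (b / \<sigma>) = measure (centered_normal \<sigma>) {..b}"
proof -
  have "measure (centered_normal \<sigma>) {..b} = measure (distr (centered_normal 1) lborel ((*) \<sigma>)) {..b}"
    using distr_centered_normal_scale[of 1 \<sigma>] assms by simp
  also have "\<dots> = measure (centered_normal 1) {x. \<sigma> * x \<le> b}"
    by (subst measure_distr) (auto simp: vimage_def)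
  also have "{x. \<sigma> * x \<le> b} = {..b / \<sigma>}"
    using assms by (auto simp: field_simps)
  finally show ?thesis by (simp add: Phi_def cdf_def)
qed

lemma two_minus_two_Phi_eq:
  assumes "\<sigma> > 0"
  shows "2 - 2 * Phi (b / \<sigma>) = 2 * measure (centered_normal \<sigma>) {b<..}"
proof -
  interpret prob_space "centered_normal \<sigma>"
    using assms by (rule prob_space_normal_density)
  have "{b<..} = space (centered_normal \<sigma>) - {..b}"
    by auto
  then show ?thesis
    using prob_compl[of "{..b}"] Phi_eq_centered_normal[OF assms] by simp
qed

lemma normal_density_antimono:
  assumes "\<bar>z\<bar> \<le> \<bar>w\<bar>"
  shows "normal_density 0 \<sigma> w \<le> normal_density 0 \<sigma> z"
proof -
  have "z\<^sup>2 \<le> w\<^sup>2" using assms by (simp add: abs_le_square_iff)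
  then show ?thesis
    unfolding normal_density_def by (intro mult_left_mono) (auto intro: divide_right_mono)
qed

lemma measure_centered_normal_shift_le:
  assumes "\<sigma> > 0" and "0 \<le> s" and "s \<le> a"
  shows "measure (centered_normal \<sigma>) {a<..a+s} \<le> measure (centered_normal \<sigma>) {a-s<..a}"
proof -
  interpret prob_space "centered_normal \<sigma>"
    using assms(1) by (rule prob_space_normal_density)
  define f where "f u = ennreal (normal_density 0 \<sigma> u) * indicator {a-s<..a} u" for u
  have [measurable]: "f \<in> borel_measurable borel" unfolding f_def by measurable
  have "emeasure (centered_normal \<sigma>) {a<..a+s} = (\<integral>\<^sup>+z. ennreal (normal_density 0 \<sigma> z) * indicator {a<..a+s} z \<partial>lborel)"
    by (simp add: emeasure_density)
  also have "\<dots> \<le> (\<integral>\<^sup>+z. f (-s + 1 * z) \<partial>lborel)"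
  proof (rule nn_integral_mono)
    fix z
    show "ennreal (normal_density 0 \<sigma> z) * indicator {a<..a+s} z \<le> f (-s + 1 * z)"
      using assms normal_density_antimono[of "z - s" z \<sigma>]
      by (auto simp: f_def indicator_def)
  qed
  also have "\<dots> = (\<integral>\<^sup>+z. f z \<partial>lborel)"
    using nn_integral_real_affine[of f 1 "-s"] by simp
  also have "\<dots> = emeasure (centered_normal \<sigma>) {a-s<..a}"
    by (simp add: emeasure_density f_def)
  finally show ?thesis
    by (simp add: emeasure_eq_measure)
qed

lemma measure_centered_normal_outside_shifted_ge:
  assumes "\<sigma> > 0" and "\<bar>s\<bar> \<le> a"
  shows "2 * measure (centered_normal \<sigma>) {a<..}
           \<le> measure (centered_normal \<sigma>) {z. z < -a - s \<or> a - s < z}"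
proof -
  interpret prob_space "centered_normal \<sigma>"
    using assms(1) by (rule prob_space_normal_density)
  let ?m = "measure (centered_normal \<sigma>)"
  have reflect: "?m {x. -x \<in> S} = ?m S" if "S \<in> sets borel" for S
    using measure_centered_normal_uminus[OF assms(1) that] .
  have nonneg: "2 * ?m {a<..} \<le> ?m {z. z < -a - s \<or> a - s < z}" if "0 \<le> s" "s \<le> a" for s
  proof -
    have "?m {a<..} = ?m {x. -x \<in> {a<..}}"
      by (rule reflect[symmetric]) simp
    also have "{x. -x \<in> {a<..}} = {..<-a}"
      by auto
    also have "{..<-a} = {..<-a-s} \<union> {-a-s..<-a}"
      using that by auto
    also have "?m \<dots> = ?m {..<-a-s} + ?m {-a-s..<-a}"
      by (rule finite_measure_Union) auto
    also have "{-a-s..<-a} = {x. -x \<in> {a<..a+s}}"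
      by auto
    also have "?m \<dots> = ?m {a<..a+s}"
      by (rule reflect) simp
    also have "\<dots> \<le> ?m {a-s<..a}"
      using measure_centered_normal_shift_le[OF assms(1) that] .
    finally have "2 * ?m {a<..} \<le> ?m {..<-a-s} + ?m {a-s<..a} + ?m {a<..}"
      by linarith
    also have "\<dots> = ?m ({..<-a-s} \<union> {a-s<..a} \<union> {a<..})"
      using that by (subst finite_measure_Union; auto simp: finite_measure_Union)+
    also have "{..<-a-s} \<union> {a-s<..a} \<union> {a<..} = {z. z < -a - s \<or> a - s < z}"
      using that by auto
    finally show ?thesis .
  qed
  show ?thesis
  proof (cases "0 \<le> s")
    case True
    then show ?thesis using nonneg assms(2) by simp
  next
    case False
    have "{x. -x \<in> {z. z < -a - s \<or> a - s < z}} = {z. z < -a - (-s) \<or> a - (-s) < z}"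
      by auto
    then show ?thesis
      using nonneg[of "-s"] reflect[of "{z. z < -a - s \<or> a - s < z}"] False assms(2) by simp
  qed
qed

lemma two_minus_two_Phi_bounds:
  assumes "b \<ge> 0"
  shows "0 \<le> 2 - 2 * Phi b" and "2 - 2 * Phi b \<le> 1"
proof -
  interpret prob_space "centered_normal 1"
    by (rule prob_space_normal_density) simp
  have tail: "2 - 2 * Phi b = 2 * prob {b<..}"
    using two_minus_two_Phi_eq[of 1 b] by simp
  then show "0 \<le> 2 - 2 * Phi b"
    by simp
  have "2 * prob {b<..} \<le> prob {z. z < -b - 0 \<or> b - 0 < z}"
    using assms by (intro measure_centered_normal_outside_shifted_ge) auto
  also have "\<dots> \<le> 1"
    by (rule prob_le_1)
  finally show "2 - 2 * Phi b \<le> 1"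
    unfolding tail .
qed

lemma measure_centered_normal_round_ne_ge:
  assumes "\<beta> > 0" and "\<lfloor>y + 1/2\<rfloor> = k"
  shows "2 - 2 * Phi (0.5 / \<beta>) \<le> measure (centered_normal \<beta>) {u. \<lfloor>y + u + 1/2\<rfloor> \<noteq> k}"
proof -
  interpret prob_space "centered_normal \<beta>"
    using assms(1) by (rule prob_space_normal_density)
  have "\<bar>y - k\<bar> \<le> 1/2"
    using assms(2) unfolding floor_eq_iff by arith
  then have "2 - 2 * Phi (0.5 / \<beta>) \<le> prob {u. u < -1/2 - (y - k) \<or> 1/2 - (y - k) < u}"
    using two_minus_two_Phi_eq[OF assms(1), of "1/2"] measure_centered_normal_outside_shifted_ge[OF assms(1)]
    by simp
  also have "\<dots> \<le> prob {u. \<lfloor>y + u + 1/2\<rfloor> \<noteq> k}"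
    by (rule finite_measure_mono) (auto simp: floor_eq_iff)
  finally show ?thesis .
qed

lemma measurable_vec_nth_compose [measurable (raw)]:
  fixes f :: "'a \<Rightarrow> real^'d"
  shows "f \<in> borel_measurable M \<Longrightarrow> (\<lambda>z. f z $ i) \<in> borel_measurable M"
  using measurable_compose[OF _ borel_measurable_nth] by blast

lemma measurable_quantH_eq [measurable]:
  fixes f g :: "'a \<Rightarrow> real^'d"
  assumes [measurable]: "f \<in> borel_measurable M" "g \<in> borel_measurable M"
  shows "Measurable.pred M (\<lambda>z. quantH (f z) = quantH (g z))"
  unfolding quantH_def vec_eq_iff by simp measurable

lemma measurable_quantH_eq_const [measurable]:
  fixes f :: "'a \<Rightarrow> real^'d"
  assumes [measurable]: "f \<in> borel_measurable M"
  shows "Measurable.pred M (\<lambda>z. quantH (f z) = c)"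
  unfolding quantH_def vec_eq_iff by simp measurable

definition escape_event :: "int^'d \<Rightarrow> ((real^'d) \<times> (real^'d)) set" where
  "escape_event p = {(x, \<delta>). quantH x = p \<and> quantH (x + \<delta>) \<noteq> p}"

lemma sets_escape_event:
  fixes p :: "int^'d"
  shows "escape_event p \<in> sets (borel \<Otimes>\<^sub>M borel)"
proof -
  have "Measurable.pred (borel \<Otimes>\<^sub>M borel) (\<lambda>(x :: real^'d, \<delta>). quantH x = p \<and> quantH (x + \<delta>) \<noteq> p)"
    by measurable
  then show ?thesis
    by (simp add: escape_event_def pred_def space_pair_measure)
qed

lemma (in pair_prob_space) measure_pair_measure_ge_sections:
  assumes "A \<in> sets M1" and "E \<in> sets (M1 \<Otimes>\<^sub>M M2)" and "0 \<le> c"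
    and "\<And>x. x \<in> A \<Longrightarrow> c \<le> measure M2 (Pair x -` E)"
  shows "c * measure M1 A \<le> measure (M1 \<Otimes>\<^sub>M M2) E"
proof -
  have "ennreal (c * measure M1 A) = (\<integral>\<^sup>+x. ennreal c * indicator A x \<partial>M1)"
    using assms(1,3) by (simp add: M1.emeasure_eq_measure ennreal_mult nn_integral_cmult_indicator)
  also have "\<dots> \<le> (\<integral>\<^sup>+x. emeasure M2 (Pair x -` E) \<partial>M1)"
    using assms(4) by (intro nn_integral_mono) (auto simp: indicator_def M2.emeasure_eq_measure)
  also have "\<dots> = emeasure (M1 \<Otimes>\<^sub>M M2) E"
    using assms(2) by (rule M2.emeasure_pair_measure_alt[symmetric])
  finally show ?thesis
    by (simp add: emeasure_eq_measure)
qed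

lemma measure_gauss_vec_quantH_shift_ne_ge:
  fixes x :: "real^'d"
  assumes "\<beta> > 0" and "quantH x = p"
  shows "2 - 2 * Phi (0.5 / \<beta>) \<le> measure (gauss_vec 0 \<beta>) {\<delta>. quantH (x + \<delta>) \<noteq> p}"
proof -
  fix i :: 'd
  interpret prob_space "gauss_vec 0 \<beta>"
    using assms(1) by (rule prob_space_gauss_vec)
  have "\<lfloor>x$i + 1/2\<rfloor> = p$i"
    using assms(2) by (auto simp: quantH_def)
  then have "2 - 2 * Phi (0.5 / \<beta>) \<le> measure (centered_normal \<beta>) {u. \<lfloor>x$i + u + 1/2\<rfloor> \<noteq> p$i}"
    by (rule measure_centered_normal_round_ne_ge[OF assms(1)])
  also have "\<dots> = prob {\<delta>. \<lfloor>x$i + \<delta>$i + 1/2\<rfloor> \<noteq> p$i}"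
    by (subst distr_gauss_vec_component[OF assms(1), of 0 i, symmetric, simplified])
       (simp add: measure_distr vimage_def)
  also have "\<dots> \<le> prob {\<delta>. quantH (x + \<delta>) \<noteq> p}"
    by (rule finite_measure_mono) (auto simp: quantH_def vec_eq_iff)
  finally show ?thesis .
qed

lemma alpha_det_le_escape:
  fixes p :: "int^'d"
  assumes "\<sigma> > 0" and "\<beta> > 0"
  shows "alpha_det p \<sigma> \<beta> \<le> 1 - measure (joint_law p \<sigma> \<beta>) (escape_event p)"
proof -
  let ?X = "gauss_vec (\<chi> i. of_int (p$i)) \<sigma>" and ?\<Delta> = "gauss_vec 0 \<beta> :: (real^'d) measure"
  interpret X: prob_space ?X using assms(1) by (rule prob_space_gauss_vec)
  interpret \<Delta>: prob_space ?\<Delta> using assms(2) by (rule prob_space_gauss_vec)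
  interpret pair_prob_space ?X ?\<Delta> ..
  have "Measurable.pred (borel \<Otimes>\<^sub>M borel) (\<lambda>(x :: real^'d, \<delta>). quantH (x + \<delta>) = quantH x)"
    by measurable
  then have "{(x :: real^'d, \<delta>). quantH (x + \<delta>) = quantH x} \<in> sets (borel \<Otimes>\<^sub>M borel)"
    by (simp add: pred_def space_pair_measure)
  then have "alpha_det p \<sigma> \<beta> + prob (escape_event p)
               = prob ({(x, \<delta>). quantH (x + \<delta>) = quantH x} \<union> escape_event p)"
    using sets_escape_event
    by (subst finite_measure_Union) (auto simp: alpha_det_def joint_law_def escape_event_def)
  moreover have "prob ({(x, \<delta>). quantH (x + \<delta>) = quantH x} \<union> escape_event p) \<le> 1"
    by (rule prob_le_1)
  ultimately show ?thesis
    unfolding joint_law_def by linarith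
qed

lemma measure_escape_event_ge:
  fixes p :: "int^'d"
  assumes "\<sigma> > 0" and "\<beta> > 0"
  shows "(2 - 2 * Phi (0.5 / \<beta>)) * (1 - alpha_fp p \<sigma>) \<le> measure (joint_law p \<sigma> \<beta>) (escape_event p)"
proof -
  let ?X = "gauss_vec (\<chi> i. of_int (p$i)) \<sigma>" and ?\<Delta> = "gauss_vec 0 \<beta> :: (real^'d) measure"
  interpret X: prob_space ?X using assms(1) by (rule prob_space_gauss_vec)
  interpret \<Delta>: prob_space ?\<Delta> using assms(2) by (rule prob_space_gauss_vec)
  interpret pair_prob_space ?X ?\<Delta> ..
  have "1 - alpha_fp p \<sigma> = X.prob {x. quantH x = p}"
    using X.prob_compl[of "{x. quantH x = p}"] by (simp add: alpha_fp_def set_diff_eq)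
  moreover have "(2 - 2 * Phi (0.5 / \<beta>)) * X.prob {x. quantH x = p} \<le> prob (escape_event p)"
  proof (rule measure_pair_measure_ge_sections)
    show "2 - 2 * Phi (0.5 / \<beta>) \<le> \<Delta>.prob (Pair x -` escape_event p)" if "x \<in> {x. quantH x = p}" for x
      using measure_gauss_vec_quantH_shift_ne_ge[OF assms(2), of x p] that by (simp add: escape_event_def)
    show "0 \<le> 2 - 2 * Phi (0.5 / \<beta>)"
      using assms(2) by (intro two_minus_two_Phi_bounds) simp
  qed (use sets_escape_event in simp_all)
  ultimately show ?thesis
    by (simp add: joint_law_def)
qed

theorem theorem1:
  fixes p :: "int^'d" and \<sigma> \<beta> :: real
  assumes "\<sigma> > 0" and "\<beta> > 0"
  shows "alpha_det p \<sigma> \<beta>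
           \<le> 1 - (2 - 2 * Phi (0.5 / \<beta>)) ^ CARD('d) * (1 - alpha_fp p \<sigma>)"
proof -
  define q where "q = 2 - 2 * Phi (0.5 / \<beta>)"
  have "0 \<le> q" and "q \<le> 1"
    unfolding q_def using two_minus_two_Phi_bounds[of "0.5 / \<beta>"] assms(2) by simp_all
  then have "q ^ CARD('d) \<le> q"
    using power_decreasing[of 1 "CARD('d)" q] by simp
  moreover have "0 \<le> 1 - alpha_fp p \<sigma>"
    using assms(1) by (simp add: alpha_fp_def prob_space.prob_le_1 prob_space_gauss_vec)
  ultimately have "q ^ CARD('d) * (1 - alpha_fp p \<sigma>) \<le> q * (1 - alpha_fp p \<sigma>)"
    by (rule mult_right_mono)
  then show ?thesis
    using alpha_det_le_escape[OF assms, of p] measure_escape_event_ge[OF assms, of p]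
    unfolding q_def by linarith
qed

end
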